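(* For all integers $L,M\ge 0$, $$\sum_{i,j\in\mathbb Z}(-1)^{i+j}q^{\binom{i+j}{2}}\begin{bmatrix}2L\\ L-i\end{bmatrix}_{q^2}\begin{bmatrix}2M\\ M-j\end{bmatrix}_{q^2}=(-1)^{L+M}q^{(L-M)^2}(q;q^2)_{L+M}.$$
   Context: $q$ is complex with $|q|<1$. $(a;q)_n=\prod_{j=0}^{n-1}(1-aq^j)$ for $n\ge0$; $(q)_n=(q;q)_n$. The Gaussian binomial is $\begin{bmatrix}n+m\\ n\end{bmatrix}_q=\frac{(q)_{n+m}}{(q)_n(q)_m}$ if $n,m$ are nonnegative integers and $0$ otherwise. $\binom{x}{2}=x(x-1)/2$. *)

theory Defs
  imports "HOL-Analysis.Analysis"
begin

definition qpoch :: "complex \<Rightarrow> complex \<Rightarrow> nat \<Rightarrow> complex" where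
  "qpoch a q n = (\<Prod>j<n. 1 - a * q ^ j)"

definition gauss_binom :: "complex \<Rightarrow> int \<Rightarrow> int \<Rightarrow> complex" where
  "gauss_binom q N K =
     (if 0 \<le> K \<and> K \<le> N
      then qpoch q q (nat N) / (qpoch q q (nat K) * qpoch q q (nat (N - K)))
      else 0)"

(* binom(x,2) = x(x-1)/2 for integer x; always a nonnegative integer *)
definition binom2 :: "int \<Rightarrow> int" where
  "binom2 x = x * (x - 1) div 2"

end

theory Submission imports Defs begin

(*
  Write [n,k] for the Gaussian binomial in base q^2 and T(x) = q^binom2(x).
  Substituting i = L - k1, j = M - k2 turns the left-hand side into
  (-1)^(L+M) D(2L, 2M, L+M), where

      D(N1, N2, a) = sum_{k1 <= N1, k2 <= N2} [N1,k1] [N2,k2] (-1)^(k1+k2) T(a - k1 - k2).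

  The proof evaluates D(N1, N2, (N1+N2)/2) for all N1, N2 of equal parity by
  induction on N2:
  - the q-Pascal rules give a three-term recurrence in each of N1, N2
    (double_sum_rec_left/right) that involves no k-dependent power of q;
  - for N2 = 0 the single sum E(2m, m) = q^(m^2) (q;q^2)_m is computed from a
    second q-Pascal rule together with the reflection T(1 - x) = T(x)
    (single_sum_centre);
  - combining the two recurrences eliminates the non-central values
    (double_sum_centre_rec), so the general case reduces to three central
    instances with smaller N2, and the claimed closed form satisfies the same
    recurrence (centre_value_rec, double_sum_centre).
  The only property of q used before the final step is that (q^2;q^2)_m never
  vanishes, which holds for |q| < 1.
*)

section \<open>q-Pochhammer symbols and Gaussian binomials\<close>

lemma qpoch_0 [simp]: "qpoch a q 0 = 1"
  by (simp add: qpoch_def)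

lemma qpoch_Suc: "qpoch a q (Suc n) = qpoch a q n * (1 - a * q ^ n)"
  by (simp add: qpoch_def)

lemma qpoch_square_nonzero:
  fixes q :: complex
  assumes "norm q < 1"
  shows "qpoch (q^2) (q^2) m \<noteq> 0"
proof -
  have "1 - q^2 * (q^2)^j \<noteq> 0" for j
  proof
    assume "1 - q^2 * (q^2)^j = 0"
    hence "q ^ (2 + 2*j) = 1" by (metis power_add power_mult right_minus_eq)
    moreover have "norm (q ^ (2 + 2*j)) < 1"
      using assms unfolding norm_power by (subst power_less_one_iff) auto
    ultimately show False by simp
  qed
  thus ?thesis unfolding qpoch_def by (simp add: prod_zero_iff)
qed

lemma gauss_binom_inside:
  "0 \<le> k \<Longrightarrow> k \<le> int n \<Longrightarrow>
   gauss_binom p (int n) k = qpoch p p n / (qpoch p p (nat k) * qpoch p p (n - nat k))"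
  unfolding gauss_binom_def by (simp add: nat_diff_distrib)

lemma gauss_binom_outside: "k < 0 \<or> k > int n \<Longrightarrow> gauss_binom p (int n) k = 0"
  unfolding gauss_binom_def by auto

lemma gauss_binom_zero: "qpoch p p n \<noteq> 0 \<Longrightarrow> gauss_binom p (int n) 0 = 1"
  unfolding gauss_binom_def by simp

lemma gauss_binom_diag: "qpoch p p n \<noteq> 0 \<Longrightarrow> gauss_binom p (int n) (int n) = 1"
  unfolding gauss_binom_def by simp

lemma gauss_binom_sym: "gauss_binom p (int n) (int n - k) = gauss_binom p (int n) k"
  unfolding gauss_binom_def by (auto simp: mult.commute)

lemma gauss_binom_pascal:
  assumes nz: "\<And>m. qpoch p p m \<noteq> 0"
  shows "gauss_binom p (int (Suc n)) k
           = gauss_binom p (int n) (k - 1) + p ^ nat k * gauss_binom p (int n) k"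
proof -
  consider "k < 0 \<or> k > int n + 1" | "k = 0" | "k = int n + 1" | "1 \<le> k \<and> k \<le> int n"
    by linarith
  then show ?thesis
  proof cases
    case 1
    then show ?thesis using gauss_binom_outside[of k "Suc n" p]
      by (auto simp: gauss_binom_outside simp del: of_nat_Suc)
  next
    case 2
    then show ?thesis using nz by (simp add: gauss_binom_outside gauss_binom_zero del: of_nat_Suc)
  next
    case 3
    then show ?thesis using nz gauss_binom_diag[of p "Suc n"] gauss_binom_diag[of p n]
      by (simp add: gauss_binom_outside add.commute)
  next
    case 4
    text \<open>Write k = j + 1 and n = j + 1 + r; all three binomials are then explicit quotients.\<close>
    define j where "j = nat k - 1"
    define r where "r = n - nat k"
    have nk: "nat k = Suc j" "nat (k - 1) = j" using 4 unfolding j_def by auto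
    have n: "n = Suc j + r" using 4 unfolding j_def r_def by (simp add: nat_le_iff)
    have lhs: "gauss_binom p (int (Suc n)) k
                 = qpoch p p (Suc (Suc (j + r))) / (qpoch p p (Suc j) * qpoch p p (Suc r))"
      by (subst gauss_binom_inside) (use 4 in \<open>auto simp: nk n\<close>)
    have left: "gauss_binom p (int n) (k - 1)
                 = qpoch p p (Suc (j + r)) / (qpoch p p j * qpoch p p (Suc r))"
      by (subst gauss_binom_inside) (use 4 in \<open>auto simp: nk n\<close>)
    have right: "gauss_binom p (int n) k
                 = qpoch p p (Suc (j + r)) / (qpoch p p (Suc j) * qpoch p p r)"
      by (subst gauss_binom_inside) (use 4 in \<open>auto simp: nk n\<close>)
    have "1 - p * p ^ j \<noteq> 0" "1 - p * p ^ r \<noteq> 0"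
      using nz[of "Suc j"] nz[of "Suc r"] by (simp_all add: qpoch_Suc)
    with nz[of j] nz[of r] show ?thesis unfolding lhs left right
      by (simp add: qpoch_Suc nk power_add divide_simps; simp add: algebra_simps)
  qed
qed

lemma gauss_binom_pascal':
  assumes nz: "\<And>m. qpoch p p m \<noteq> 0"
  shows "gauss_binom p (int (Suc n)) k
           = gauss_binom p (int n) k + p ^ nat (int n + 1 - k) * gauss_binom p (int n) (k - 1)"
  using gauss_binom_pascal[OF nz, of n "int n + 1 - k"]
        gauss_binom_sym[of p "Suc n" k] gauss_binom_sym[of p n k] gauss_binom_sym[of p n "k - 1"]
  by (simp add: algebra_simps)

lemma gauss_binom_absorb:
  assumes nz: "\<And>m. qpoch p p m \<noteq> 0"
  shows "(1 - p ^ nat k) * gauss_binom p (int (Suc n)) k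
           = (1 - p ^ Suc n) * gauss_binom p (int n) (k - 1)"
proof -
  consider "k < 0 \<or> k > int n + 1" | "k = 0" | "1 \<le> k \<and> k \<le> int n + 1" by linarith
  then show ?thesis
  proof cases
    case 1
    then show ?thesis using gauss_binom_outside[of k "Suc n" p]
      by (auto simp: gauss_binom_outside simp del: of_nat_Suc)
  next
    case 2
    then show ?thesis by (simp add: gauss_binom_outside)
  next
    case 3
    define j where "j = nat k - 1"
    define r where "r = Suc n - nat k"
    have nk: "nat k = Suc j" "nat (k - 1) = j" using 3 unfolding j_def by auto
    have n: "n = j + r" using 3 unfolding j_def r_def by (simp add: nat_le_iff) linarith
    have lhs: "gauss_binom p (int (Suc n)) k
                 = qpoch p p (Suc (j + r)) / (qpoch p p (Suc j) * qpoch p p r)"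
      by (subst gauss_binom_inside) (use 3 in \<open>auto simp: nk n\<close>)
    have rhs: "gauss_binom p (int n) (k - 1) = qpoch p p (j + r) / (qpoch p p j * qpoch p p r)"
      by (subst gauss_binom_inside) (use 3 in \<open>auto simp: nk n\<close>)
    have "1 - p * p ^ j \<noteq> 0" using nz[of "Suc j"] by (simp add: qpoch_Suc)
    with nz[of j] nz[of r] show ?thesis unfolding lhs rhs
      by (simp add: qpoch_Suc nk n power_add divide_simps; simp add: algebra_simps)
  qed
qed

lemma binom2_double: "2 * binom2 x = x * (x - 1)"
proof -
  have "even (x * (x - 1))" by auto
  thus ?thesis unfolding binom2_def by (rule dvd_mult_div_cancel)
qed

lemma binom2_nonneg: "0 \<le> binom2 x"
proof -
  have "0 \<le> x * (x - 1)"
    by (cases "x \<le> 0") (auto intro: mult_nonpos_nonpos mult_nonneg_nonneg)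
  thus ?thesis using binom2_double[of x] by linarith
qed

lemma binom2_reflect: "binom2 (1 - x) = binom2 x"
  using binom2_double[of x] binom2_double[of "1 - x"] by (simp add: algebra_simps)

lemma binom2_add_two: "binom2 (x + 2) = binom2 x + 2 * x + 1"
  using binom2_double[of x] binom2_double[of "x + 2"] by (simp add: algebra_simps)

lemma minus_one_power_diff: "k \<le> n \<Longrightarrow> (-1::'a::comm_ring_1) ^ (n - k) = (-1) ^ n * (-1) ^ k"
  by (cases "even n"; cases "even k") (auto simp: even_diff_nat)

lemma minus_one_power_abs_diff:
  "(-1::'a::comm_ring_1) ^ nat \<bar>int a - int b\<bar> = (-1) ^ a * (-1) ^ b"
  by (cases "b \<le> a") (auto simp: minus_one_power_diff nat_diff_distrib mult.commute)

section \<open>The single and double alternating sums\<close>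

definition qtri :: "complex \<Rightarrow> int \<Rightarrow> complex" where
  "qtri q x = q ^ nat (binom2 x)"

definition gb2 :: "complex \<Rightarrow> nat \<Rightarrow> int \<Rightarrow> complex" where
  "gb2 q n k = gauss_binom (q^2) (int n) k"

definition gauss_transform :: "complex \<Rightarrow> nat \<Rightarrow> (nat \<Rightarrow> complex) \<Rightarrow> complex" where
  "gauss_transform q n \<phi> = (\<Sum>k\<le>n. gb2 q n (int k) * \<phi> k)"

text \<open>E(n, a) = sum_k [n,k] (-1)^k T(a - k) and D(N1, N2, a) = sum_k [N1,k] (-1)^k E(N2, a - k).\<close>
definition single_sum :: "complex \<Rightarrow> nat \<Rightarrow> int \<Rightarrow> complex" where
  "single_sum q n a = gauss_transform q n (\<lambda>k. (-1)^k * qtri q (a - int k))"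

definition double_sum :: "complex \<Rightarrow> nat \<Rightarrow> nat \<Rightarrow> int \<Rightarrow> complex" where
  "double_sum q N1 N2 a = gauss_transform q N1 (\<lambda>k. (-1)^k * single_sum q N2 (a - int k))"

text \<open>The value claimed for D(N1, N2, (N1+N2)/2) when N1 + N2 is even.\<close>
definition centre_value :: "complex \<Rightarrow> nat \<Rightarrow> nat \<Rightarrow> complex" where
  "centre_value q N1 N2 =
     (-1)^N1 * q ^ nat (((int N1 - int N2) div 2)^2) * qpoch q (q^2) ((N1 + N2) div 2)"

lemma double_sum_swap: "double_sum q N1 N2 a = double_sum q N2 N1 a"
proof -
  have "double_sum q N1 N2 a = (\<Sum>k1\<le>N1. \<Sum>k2\<le>N2. gb2 q N1 (int k1) * gb2 q N2 (int k2)
           * (-1)^k1 * (-1)^k2 * qtri q (a - int k1 - int k2))"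
    unfolding double_sum_def single_sum_def gauss_transform_def
    by (simp add: sum_distrib_left algebra_simps)
  also have "\<dots> = double_sum q N2 N1 a"
    unfolding double_sum_def single_sum_def gauss_transform_def
    by (subst sum.swap) (simp add: sum_distrib_left algebra_simps)
  finally show ?thesis .
qed

context
  fixes q :: complex
  assumes nz: "\<And>m. qpoch (q^2) (q^2) m \<noteq> 0"
begin

lemma gb2_outside: "k < 0 \<or> k > int n \<Longrightarrow> gb2 q n k = 0"
  unfolding gb2_def by (rule gauss_binom_outside)

text \<open>Since [n,k] vanishes for k > n, the range of a transform may be enlarged or shifted.\<close>
lemma gauss_transform_extend:
  "n \<le> m \<Longrightarrow> (\<Sum>k\<le>m. gb2 q n (int k) * \<phi> k) = gauss_transform q n \<phi>"
  unfolding gauss_transform_def by (rule sum.mono_neutral_right) (auto simp: gb2_outside)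

lemma gauss_transform_shift:
  "(\<Sum>k\<le>Suc m. gb2 q n (int k - 1) * \<phi> k) = (\<Sum>k\<le>m. gb2 q n (int k) * \<phi> (Suc k))"
  by (subst sum.atMost_Suc_shift) (simp add: gb2_outside)

text \<open>Combining Pascal and absorption gives a recurrence free of k-dependent powers:
  [n+2,k] = [n+1,k-1] + [n+1,k] - (1 - q^(2(n+1))) [n,k-1].\<close>
lemma gb2_rec:
  "gb2 q (Suc (Suc n)) k = gb2 q (Suc n) (k - 1) + gb2 q (Suc n) k - (1 - (q^2)^Suc n) * gb2 q n (k - 1)"
  using gauss_binom_pascal[OF nz, of "Suc n" k] gauss_binom_absorb[OF nz, of k n]
  unfolding gb2_def by (simp add: algebra_simps)

lemma gauss_transform_rec:
  "gauss_transform q (Suc N) \<phi> = gauss_transform q N (\<lambda>k. \<phi> (Suc k)) + gauss_transform q N \<phi>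
     - (1 - (q^2)^N) * gauss_transform q (N - 1) (\<lambda>k. \<phi> (Suc k))"
proof (cases N)
  case 0
  have "gb2 q 0 0 = 1" "gb2 q 1 0 = 1" "gb2 q 1 1 = 1"
    unfolding gb2_def using gauss_binom_zero[OF nz, of 0] gauss_binom_zero[OF nz, of 1]
      gauss_binom_diag[OF nz, of 1] by simp_all
  with 0 show ?thesis by (simp add: gauss_transform_def)
next
  case (Suc n)
  have "gauss_transform q (Suc N) \<phi> = (\<Sum>k\<le>Suc (Suc n). gb2 q (Suc n) (int k - 1) * \<phi> k)
     + (\<Sum>k\<le>Suc (Suc n). gb2 q (Suc n) (int k) * \<phi> k)
     - (1 - (q^2)^Suc n) * (\<Sum>k\<le>Suc (Suc n). gb2 q n (int k - 1) * \<phi> k)"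
    unfolding gauss_transform_def Suc gb2_rec
    by (simp add: algebra_simps sum.distrib sum_subtractf sum_distrib_left)
  also have "(\<Sum>k\<le>Suc (Suc n). gb2 q (Suc n) (int k - 1) * \<phi> k) = gauss_transform q N (\<lambda>k. \<phi> (Suc k))"
    unfolding gauss_transform_shift Suc gauss_transform_def ..
  also have "(\<Sum>k\<le>Suc (Suc n). gb2 q (Suc n) (int k) * \<phi> k) = gauss_transform q N \<phi>"
    unfolding Suc by (rule gauss_transform_extend) simp
  also have "(\<Sum>k\<le>Suc (Suc n). gb2 q n (int k - 1) * \<phi> k) = gauss_transform q (N - 1) (\<lambda>k. \<phi> (Suc k))"
    unfolding gauss_transform_shift Suc by (simp only: diff_Suc_1, rule gauss_transform_extend) simp
  finally show ?thesis using Suc by simp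
qed

lemma double_sum_rec_left:
  "double_sum q (Suc N) N2 a
     = - double_sum q N N2 (a - 1) + double_sum q N N2 a + (1 - (q^2)^N) * double_sum q (N - 1) N2 (a - 1)"
proof -
  have "(\<lambda>k. (-1::complex) ^ Suc k * single_sum q N2 (a - int (Suc k)))
          = (\<lambda>k. - ((-1)^k * single_sum q N2 (a - 1 - int k)))"
    by (auto simp: algebra_simps)
  moreover have "gauss_transform q n (\<lambda>k. - \<psi> k) = - gauss_transform q n \<psi>" for n \<psi>
    unfolding gauss_transform_def by (simp add: sum_negf)
  ultimately show ?thesis unfolding double_sum_def gauss_transform_rec by simp
qed

lemma double_sum_rec_right:
  "double_sum q N1 (Suc N) a
     = - double_sum q N1 N (a - 1) + double_sum q N1 N a + (1 - (q^2)^N) * double_sum q N1 (N - 1) (a - 1)"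
  using double_sum_rec_left[of N N1 a] double_sum_swap by metis

lemma single_sum_zero: "single_sum q 0 b = qtri q b"
  unfolding single_sum_def gauss_transform_def gb2_def using gauss_binom_zero[OF nz, of 0] by simp

lemma double_sum_zero_right: "double_sum q N 0 a = single_sum q N a"
  by (simp add: double_sum_def single_sum_zero single_sum_def[of q N])

text \<open>Reflection: E(n, n + 1 - a) = (-1)^n E(n, a), from k \<mapsto> n - k and T(1 - x) = T(x).\<close>
lemma single_sum_reflect: "single_sum q n (int n + 1 - a) = (-1)^n * single_sum q n a"
proof -
  have "single_sum q n (int n + 1 - a)
          = (\<Sum>k\<le>n. gb2 q n (int (n - k)) * ((-1)^(n - k) * qtri q (int n + 1 - a - int (n - k))))"
    unfolding single_sum_def gauss_transform_def
    by (rule sum.reindex_bij_witness[where i="\<lambda>k. n - k" and j="\<lambda>k. n - k"]) auto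
  also have "\<dots> = (\<Sum>k\<le>n. (-1)^n * (gb2 q n (int k) * ((-1)^k * qtri q (a - int k))))"
  proof (rule sum.cong[OF refl])
    fix k assume "k \<in> {..n}"
    hence kn: "k \<le> n" by simp
    have "gb2 q n (int (n - k)) = gb2 q n (int k)"
      unfolding gb2_def using gauss_binom_sym[of "q^2" n "int k"] kn by (simp add: of_nat_diff)
    moreover have "qtri q (int n + 1 - a - int (n - k)) = qtri q (a - int k)"
      unfolding qtri_def using binom2_reflect[of "a - int k"] kn by (simp add: of_nat_diff algebra_simps)
    ultimately show "gb2 q n (int (n - k)) * ((-1)^(n - k) * qtri q (int n + 1 - a - int (n - k)))
                       = (-1)^n * (gb2 q n (int k) * ((-1)^k * qtri q (a - int k)))"
      by (simp add: minus_one_power_diff[OF kn] algebra_simps)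
  qed
  also have "\<dots> = (-1)^n * single_sum q n a"
    unfolding single_sum_def gauss_transform_def by (simp add: sum_distrib_left)
  finally show ?thesis .
qed

text \<open>The second Pascal rule gives E(n+1, a) = E(n, a) - q^(2n+1-2a) E(n, a+1) for a \<le> n;
  the power of q produced by Pascal is absorbed by shifting T via binom2_add_two.\<close>
lemma single_sum_rec:
  assumes an: "a \<le> int n"
  shows "single_sum q (Suc n) a = single_sum q n a - q ^ nat (2 * int n + 1 - 2 * a) * single_sum q n (a + 1)"
proof -
  have pascal: "gb2 q (Suc n) k = gb2 q n k + (q^2)^nat (int n + 1 - k) * gb2 q n (k - 1)" for k
    unfolding gb2_def by (rule gauss_binom_pascal'[OF nz])
  have "single_sum q (Suc n) a = (\<Sum>k\<le>Suc n. gb2 q n (int k) * ((-1)^k * qtri q (a - int k)))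
       + (\<Sum>k\<le>Suc n. gb2 q n (int k - 1) * ((q^2)^nat (int n + 1 - int k) * (-1)^k * qtri q (a - int k)))"
    unfolding single_sum_def gauss_transform_def pascal by (simp add: algebra_simps sum.distrib)
  also have "(\<Sum>k\<le>Suc n. gb2 q n (int k) * ((-1)^k * qtri q (a - int k))) = single_sum q n a"
    unfolding single_sum_def by (rule gauss_transform_extend) simp
  also have "(\<Sum>k\<le>Suc n. gb2 q n (int k - 1) * ((q^2)^nat (int n + 1 - int k) * (-1)^k * qtri q (a - int k)))
      = (\<Sum>k\<le>n. gb2 q n (int k) * ((q^2)^nat (int n - int k) * (-1)^Suc k * qtri q (a - 1 - int k)))"
    unfolding gauss_transform_shift by (simp add: algebra_simps)
  also have "\<dots> = (\<Sum>k\<le>n. - (q ^ nat (2 * int n + 1 - 2 * a) * (gb2 q n (int k) * ((-1)^k * qtri q (a + 1 - int k)))))"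
  proof (rule sum.cong[OF refl])
    fix k assume "k \<in> {..n}"
    have "2 * nat (int n - int k) + nat (binom2 (a - 1 - int k))
            = nat (2 * int n + 1 - 2 * a) + nat (binom2 (a + 1 - int k))"
      using binom2_add_two[of "a - 1 - int k"] binom2_nonneg[of "a - 1 - int k"]
        binom2_nonneg[of "a + 1 - int k"] \<open>k \<in> {..n}\<close> an
      by (simp add: algebra_simps nat_add_distrib[symmetric] nat_mult_distrib)
    hence "(q^2)^nat (int n - int k) * qtri q (a - 1 - int k)
             = q ^ nat (2 * int n + 1 - 2 * a) * qtri q (a + 1 - int k)"
      unfolding qtri_def power_mult[symmetric] power_add[symmetric] by simp
    thus "gb2 q n (int k) * ((q^2)^nat (int n - int k) * (-1)^Suc k * qtri q (a - 1 - int k))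
            = - (q ^ nat (2 * int n + 1 - 2 * a) * (gb2 q n (int k) * ((-1)^k * qtri q (a + 1 - int k))))"
      by (simp add: algebra_simps)
  qed
  also have "\<dots> = - (q ^ nat (2 * int n + 1 - 2 * a) * single_sum q n (a + 1))"
    unfolding single_sum_def gauss_transform_def sum_distrib_left by (rule sum_negf)
  finally show ?thesis by simp
qed

text \<open>The base case N2 = 0: E(2m, m) = q^(m^2) (q;q^2)_m.  Two steps of single_sum_rec
  lead from 2m to 2m+2; reflection identifies E(2m, m+1) with E(2m, m) and kills E(2m+1, m+1).\<close>
lemma single_sum_centre: "single_sum q (2*m) (int m) = q^(m^2) * qpoch q (q^2) m"
proof (induction m)
  case 0
  show ?case by (simp add: single_sum_zero qtri_def binom2_def)
next
  case (Suc m)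
  have "nat (2 * int (2*m) + 1 - 2 * int m) = 2*m+1" by simp
  hence odd_step: "single_sum q (Suc (2*m)) (int m) = (1 - q^(2*m+1)) * single_sum q (2*m) (int m)"
    using single_sum_rec[of "int m" "2*m"] single_sum_reflect[of "2*m" "int m"]
    by (simp add: algebra_simps)
  have vanish: "single_sum q (Suc (2*m)) (int m + 1) = 0"
    using single_sum_reflect[of "Suc (2*m)" "int m + 1"] by (simp add: algebra_simps)
  have even_step: "single_sum q (2 * Suc m) (int (Suc m))
                     = - (q^(2*m+1) * single_sum q (Suc (2*m)) (int m + 2))"
  proof -
    have "nat (2 * int (Suc (2*m)) + 1 - 2 * (int m + 1)) = 2*m+1" by simp
    thus ?thesis using single_sum_rec[of "int m + 1" "Suc (2*m)"] vanish
      by (simp add: algebra_simps eq_neg_iff_add_eq_0)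
  qed
  have "single_sum q (Suc (2*m)) (int m + 2) = - single_sum q (Suc (2*m)) (int m)"
    using single_sum_reflect[of "Suc (2*m)" "int m"] by (simp add: algebra_simps)
  hence "single_sum q (2 * Suc m) (int (Suc m)) = q^(2*m+1) * (1 - q^(2*m+1)) * single_sum q (2*m) (int m)"
    using even_step odd_step by simp
  also have "\<dots> = q^(Suc m ^ 2) * qpoch q (q^2) (Suc m)"
    unfolding Suc.IH qpoch_Suc
    by (simp add: algebra_simps power2_eq_square power_add power_mult[symmetric] mult_2_right)
  finally show ?case .
qed


text \<open>Eliminating the non-central values from the two recurrences gives a recurrence
  linking only values of D at the centre a = (N1+N2)/2.\<close>
lemma double_sum_centre_rec:
  "double_sum q N1 (Suc n) a
     = double_sum q (Suc N1) n a + (1 - (q^2)^n) * double_sum q N1 (n - 1) (a - 1)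
       - (1 - (q^2)^N1) * double_sum q (N1 - 1) n (a - 1)"
  using double_sum_rec_left[of N1 n a] double_sum_rec_right[of N1 n a] by simp

end

lemma centre_value_eq:
  assumes "int N1 - int N2 = 2 * d" "N1 + N2 = 2 * m"
  shows "centre_value q N1 N2 = (-1)^N1 * q ^ nat (d^2) * qpoch q (q^2) m"
  using assms unfolding centre_value_def by simp

text \<open>The claimed central values satisfy the same recurrence.  With d = (N1 - N2)/2 all four
  values are (q;q^2)_(m-1) times q^(d^2) or q^((d+1)^2), up to sign and a factor 1 - q^(2m-1).\<close>
lemma centre_value_rec:
  assumes m: "N1 + Suc n = 2 * m"
  shows "centre_value q N1 (Suc n)
           = centre_value q (Suc N1) n + (1 - (q^2)^n) * centre_value q N1 (n - 1)
             - (1 - (q^2)^N1) * centre_value q (N1 - 1) n"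
proof -
  define d where "d = (int N1 - int (Suc n)) div 2"
  have d: "int N1 - int (Suc n) = 2 * d" using m unfolding d_def by presburger
  have m1: "m \<ge> 1" using m by simp
  define P where "P = qpoch q (q^2) (m - 1)"
  define x where "x = q * (q^2)^(m - 1)"
  have Pm: "qpoch q (q^2) m = P * (1 - x)"
    unfolding P_def x_def using qpoch_Suc[of q "q^2" "m - 1"] m1 by simp
  define e0 where "e0 = nat (d^2)"
  define e1 where "e1 = nat ((d + 1)^2)"
  have v0: "centre_value q N1 (Suc n) = (-1)^N1 * q^e0 * (P * (1 - x))"
    unfolding e0_def Pm[symmetric] by (rule centre_value_eq[OF d m])
  have v1: "centre_value q (Suc N1) n = - ((-1)^N1 * q^e1 * (P * (1 - x)))"
    unfolding e1_def Pm[symmetric] using centre_value_eq[of "Suc N1" n "d + 1" m] d m by simp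
  have v2: "(1 - (q^2)^n) * centre_value q N1 (n - 1) = (1 - (q^2)^n) * ((-1)^N1 * q^e1 * P)"
    unfolding e1_def P_def using centre_value_eq[of N1 "n - 1" "d + 1" "m - 1"] d m
    by (cases n) simp_all
  have v3: "(1 - (q^2)^N1) * centre_value q (N1 - 1) n = (1 - (q^2)^N1) * (- ((-1)^N1 * q^e0 * P))"
    unfolding e0_def P_def using centre_value_eq[of "N1 - 1" n d "m - 1"] d m
    by (cases N1) simp_all
  have exponents: "int e1 + 2 * int n = int e0 + 2 * int m - 1" "int e0 + 2 * int N1 = int e1 + 2 * int m - 1"
  proof -
    have "int e0 = d^2" "int e1 = (d + 1)^2" unfolding e0_def e1_def by simp_all
    thus "int e1 + 2 * int n = int e0 + 2 * int m - 1" "int e0 + 2 * int N1 = int e1 + 2 * int m - 1"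
      using d m by (simp_all add: power2_eq_square algebra_simps)
  qed
  have shift: "q^a * (q^2)^b = q^c * x" if "a + 2 * b = c + (1 + 2 * (m - 1))" for a b c
  proof -
    have "q^a * (q^2)^b = q^(c + (1 + 2 * (m - 1)))"
      unfolding that[symmetric] by (simp add: power_add power_mult)
    thus ?thesis unfolding x_def by (simp add: power_add power_mult)
  qed
  have "q^e1 * (q^2)^n = q^e0 * x" "q^e0 * (q^2)^N1 = q^e1 * x"
    using exponents m1 by (intro shift; linarith)+
  moreover have "s * u0 * (P * (1 - x))
                   = - (s * u1 * (P * (1 - x))) + (1 - y) * (s * u1 * P) - (1 - z) * - (s * u0 * P)"
    if "u1 * y = u0 * x" "u0 * z = u1 * x" for s u0 u1 y z :: complex
    using that by algebra
  ultimately show ?thesis unfolding v0 v1 v2 v3 by blast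
qed

lemma double_sum_centre:
  fixes q :: complex
  assumes nz: "\<And>m. qpoch (q^2) (q^2) m \<noteq> 0" and even: "N1 + N2 = 2 * m"
  shows "double_sum q N1 N2 (int m) = centre_value q N1 N2"
  using even
proof (induction N2 arbitrary: N1 m rule: less_induct)
  case (less N2)
  show ?case
  proof (cases N2)
    case 0
    with less.prems have "centre_value q N1 N2 = q^(m^2) * qpoch q (q^2) m"
      using centre_value_eq[of N1 0 "int m" m] by (simp add: nat_power_eq)
    with 0 less.prems show ?thesis
      by (simp add: double_sum_zero_right[OF nz] single_sum_centre[OF nz])
  next
    case (Suc n)
    have m1: "m \<ge> 1" using less.prems Suc by simp
    have step: "double_sum q (Suc N1) n (int m) = centre_value q (Suc N1) n"
      using less.IH[of n "Suc N1" m] less.prems Suc by simp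
    have left: "(1 - (q^2)^n) * double_sum q N1 (n - 1) (int m - 1)
                  = (1 - (q^2)^n) * centre_value q N1 (n - 1)"
      using less.IH[of "n - 1" N1 "m - 1"] less.prems Suc m1 by (cases n) (simp_all add: of_nat_diff)
    have right: "(1 - (q^2)^N1) * double_sum q (N1 - 1) n (int m - 1)
                  = (1 - (q^2)^N1) * centre_value q (N1 - 1) n"
      using less.IH[of n "N1 - 1" "m - 1"] less.prems Suc m1 by (cases N1) (simp_all add: of_nat_diff)
    show ?thesis
      unfolding Suc double_sum_centre_rec[OF nz] step left right
      using centre_value_rec[of N1 n m] less.prems Suc by simp
  qed
qed


lemma sum_centred_interval: "(\<Sum>i\<in>{-int n..int n}. g i) = (\<Sum>k\<le>2*n. g (int n - int k))"
  by (rule sum.reindex_bij_witness[where i="\<lambda>k. int n - int k" and j="\<lambda>i. nat (int n - i)"]) auto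

text \<open>The doubly infinite sum has finite support |i| \<le> L, |j| \<le> M; substituting
  i = L - k1, j = M - k2 turns it into (-1)^(L+M) D(2L, 2M, L+M).\<close>
lemma infsum_eq_double_sum:
  fixes q :: complex and L M :: nat
  shows "(\<Sum>\<^sub>\<infinity>(i, j) \<in> (UNIV :: (int \<times> int) set).
            (-1) ^ nat \<bar>i + j\<bar> * q ^ nat (binom2 (i + j))
            * gauss_binom (q^2) (2 * int L) (int L - i)
            * gauss_binom (q^2) (2 * int M) (int M - j))
         = (-1)^(L + M) * double_sum q (2 * L) (2 * M) (int (L + M))"
    (is "infsum ?f UNIV = _")
proof -
  define S where "S = {-int L..int L} \<times> {-int M..int M}"
  have "infsum ?f UNIV = infsum ?f S"
  proof (rule infsum_cong_neutral)
    fix x assume "x \<in> UNIV - S"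
    then show "?f x = 0" unfolding S_def gauss_binom_def by (cases x) auto
  qed auto
  also have "\<dots> = (\<Sum>i\<in>{-int L..int L}. \<Sum>j\<in>{-int M..int M}. ?f (i, j))"
    unfolding S_def by (simp add: sum.cartesian_product)
  also have "\<dots> = (\<Sum>k1\<le>2*L. \<Sum>k2\<le>2*M. ?f (int L - int k1, int M - int k2))"
    unfolding sum_centred_interval ..
  also have "\<dots> = (-1)^(L + M) * double_sum q (2 * L) (2 * M) (int (L + M))"
    unfolding double_sum_def single_sum_def gauss_transform_def gb2_def qtri_def sum_distrib_left
  proof (intro sum.cong refl)
    fix k1 k2
    have sum: "int L - int k1 + (int M - int k2) = int (L + M) - int (k1 + k2)"
              "int (L + M) - int k1 - int k2 = int (L + M) - int (k1 + k2)" by simp_all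
    show "?f (int L - int k1, int M - int k2) = (-1) ^ (L + M) * (gauss_binom (q^2) (int (2 * L)) (int k1) *
          ((-1) ^ k1 * (gauss_binom (q^2) (int (2 * M)) (int k2) *
          ((-1) ^ k2 * q ^ nat (binom2 (int (L + M) - int k1 - int k2))))))"
      unfolding prod.case sum minus_one_power_abs_diff by (simp add: algebra_simps power_add)
  qed
  finally show ?thesis .
qed

theorem mainTheorem6:
  fixes q :: complex and L M :: nat
  assumes "norm q < 1"
  shows "(\<Sum>\<^sub>\<infinity>(i, j) \<in> (UNIV :: (int \<times> int) set).
            (-1) ^ nat \<bar>i + j\<bar> * q ^ nat (binom2 (i + j))
            * gauss_binom (q^2) (2 * int L) (int L - i)
            * gauss_binom (q^2) (2 * int M) (int M - j))
         = (-1) ^ (L + M) * q ^ nat ((int L - int M)^2) * qpoch q (q^2) (L + M)"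
proof -
  have "double_sum q (2 * L) (2 * M) (int (L + M)) = centre_value q (2 * L) (2 * M)"
    by (rule double_sum_centre[OF qpoch_square_nonzero[OF assms]]) simp
  also have "\<dots> = q ^ nat ((int L - int M)^2) * qpoch q (q^2) (L + M)"
    by (subst centre_value_eq[where d = "int L - int M" and m = "L + M"]) simp_all
  finally show ?thesis unfolding infsum_eq_double_sum by simp
qed

end
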